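(* Let $(A,\to,1)$ be an algebra of type $(2,0)$ satisfying (Re), (M) and (Ex). Then $(A,\to,1)$ satisfies ( ** ) if and only if it satisfies (Tr).
   Context: Properties, required for all $x,y,z\in A$: (Re) $x\to x=1$; (M) $1\to x=x$; (Ex) $x\to(y\to z)=y\to(x\to z)$; ( ** ) $y\to z=1$ implies $(z\to x)\to(y\to x)=1$; (Tr) $x\to y=1$ and $y\to z=1$ imply $x\to z=1$. *)

theory Defs
  imports Main
begin

(* An algebra (A, imp, one) of type (2,0); A is the whole type 'a. *)

definition prop_Re :: "('a \<Rightarrow> 'a \<Rightarrow> 'a) \<Rightarrow> 'a \<Rightarrow> bool" where
  "prop_Re imp one \<longleftrightarrow> (\<forall>x. imp x x = one)"

definition prop_M :: "('a \<Rightarrow> 'a \<Rightarrow> 'a) \<Rightarrow> 'a \<Rightarrow> bool" where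
  "prop_M imp one \<longleftrightarrow> (\<forall>x. imp one x = x)"

definition prop_Ex :: "('a \<Rightarrow> 'a \<Rightarrow> 'a) \<Rightarrow> bool" where
  "prop_Ex imp \<longleftrightarrow> (\<forall>x y z. imp x (imp y z) = imp y (imp x z))"

definition prop_SS :: "('a \<Rightarrow> 'a \<Rightarrow> 'a) \<Rightarrow> 'a \<Rightarrow> bool" where
  "prop_SS imp one \<longleftrightarrow> (\<forall>x y z. imp y z = one \<longrightarrow> imp (imp z x) (imp y x) = one)"

definition prop_Tr :: "('a \<Rightarrow> 'a \<Rightarrow> 'a) \<Rightarrow> 'a \<Rightarrow> bool" where
  "prop_Tr imp one \<longleftrightarrow> (\<forall>x y z. imp x y = one \<longrightarrow> imp y z = one \<longrightarrow> imp x z = one)"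

end

theory Submission
  imports Defs
begin

(* From x -> y = 1, (SS) gives (y -> z) -> (x -> z) = 1; if also y -> z = 1, then (M) turns
   this into x -> z = 1, which is (Tr).  Conversely, (Re) and (Ex) give z -> ((z -> x) -> x) = 1,
   so from y -> z = 1 transitivity yields y -> ((z -> x) -> x) = 1, and (Ex) swaps this into
   (z -> x) -> (y -> x) = 1, which is (SS). *)

lemma imp_modus_ponens_eq_one:
  assumes "prop_Re imp one" and "prop_Ex imp"
  shows "imp x (imp (imp x y) y) = one"
proof -
  have "imp x (imp (imp x y) y) = imp (imp x y) (imp x y)"
    using assms(2) unfolding prop_Ex_def by blast
  also have "\<dots> = one"
    using assms(1) unfolding prop_Re_def by blast
  finally show ?thesis .
qed

lemma prop_Tr_if_prop_SS:
  assumes "prop_M imp one" and "prop_SS imp one"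
  shows "prop_Tr imp one"
  unfolding prop_Tr_def
proof (intro allI impI)
  fix x y z assume xy: "imp x y = one" and yz: "imp y z = one"
  have "imp (imp y z) (imp x z) = one"
    using assms(2) xy unfolding prop_SS_def by blast
  with yz assms(1) show "imp x z = one"
    unfolding prop_M_def by simp
qed

lemma prop_SS_if_prop_Tr:
  assumes "prop_Re imp one" and "prop_Ex imp" and "prop_Tr imp one"
  shows "prop_SS imp one"
  unfolding prop_SS_def
proof (intro allI impI)
  fix x y z assume yz: "imp y z = one"
  have "imp z (imp (imp z x) x) = one"
    using imp_modus_ponens_eq_one[OF assms(1,2)] .
  with yz assms(3) have "imp y (imp (imp z x) x) = one"
    unfolding prop_Tr_def by blast
  moreover have "imp y (imp (imp z x) x) = imp (imp z x) (imp y x)"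
    using assms(2) unfolding prop_Ex_def by blast
  ultimately show "imp (imp z x) (imp y x) = one" by simp
qed

theorem theorem2p3:
  fixes imp :: "'a \<Rightarrow> 'a \<Rightarrow> 'a" and one :: 'a
  assumes "prop_Re imp one" and "prop_M imp one" and "prop_Ex imp"
  shows "prop_SS imp one \<longleftrightarrow> prop_Tr imp one"
  using prop_Tr_if_prop_SS[OF assms(2)] prop_SS_if_prop_Tr[OF assms(1,3)] ..

end
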